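(* The perfect-secrecy capacity of a $(\rho_r,\rho_w)$-AWTP channel satisfies $\mathsf C^0\le 1-\rho_r-\rho_w$; that is, every rate achievable by a family of perfectly secure ($\epsilon=0$) AWTP codes for the channel is at most $1-\rho_r-\rho_w$.
   Context: $\Sigma$ finite additive group, $[N]=\{1,\dots,N\}$. $(\rho_r,\rho_w)$-AWTP channel: adaptive unbounded adversary reads the sent codeword $c\in\Sigma^N$ on a set $S_r$, $|S_r|\le\rho_rN$, and adds an error vector supported in a set $S_w$, $|S_w|\le\rho_wN$, depending on its view. An $(\epsilon,\delta)$-AWTP code: randomized encoder $\mathcal M\to\Sigma^N$ and deterministic decoder $\Sigma^N\to\mathcal M$ such that adversary views for any two messages have statistical distance at most $\epsilon$ and decoding error probability is at most $\delta$ for every adversary; perfectly secure means $\epsilon=0$. Rate $\log|\mathcal M|/(N\log|\Sigma|)$. A family $\{C^N\}$ achieves rate $R$ if for every $\xi>0$ there is $N_0$ with, for all $N\ge N_0$, rate of $C^N\ge R-\xi$ and error probability $\le\xi$. $\mathsf C^0$ is the largest achievable rate over perfectly secure code families. *)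

theory Defs
  imports "HOL-Probability.Probability"
begin

text \<open>Codewords of length N over the alphabet 'a are modelled as functions
  nat => 'a that vanish outside the index set {1..N}.\<close>

definition word_on :: "nat \<Rightarrow> (nat \<Rightarrow> 'a::zero) \<Rightarrow> bool" where
  "word_on N c \<longleftrightarrow> (\<forall>i. i \<notin> {1..N} \<longrightarrow> c i = 0)"

text \<open>Adaptive reading: the query strategy q chooses the next position to read
  as a function of the values read so far. reads q c k is the list of the
  first k values read from the codeword c.\<close>

fun reads :: "('a list \<Rightarrow> nat) \<Rightarrow> (nat \<Rightarrow> 'a) \<Rightarrow> nat \<Rightarrow> 'a list" where
  "reads q c 0 = []"
| "reads q c (Suc k) = reads q c k @ [c (q (reads q c k))]"

definition n_reads :: "nat \<Rightarrow> real \<Rightarrow> nat" where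
  "n_reads N \<rho>r = nat \<lfloor>\<rho>r * real N\<rfloor>"

definition adv_view :: "nat \<Rightarrow> real \<Rightarrow> ('a list \<Rightarrow> nat) \<Rightarrow> (nat \<Rightarrow> 'a) \<Rightarrow> 'a list" where
  "adv_view N \<rho>r q c = reads q c (n_reads N \<rho>r)"

definition valid_reader :: "nat \<Rightarrow> ('a list \<Rightarrow> nat) \<Rightarrow> bool" where
  "valid_reader N q \<longleftrightarrow> (\<forall>v. q v \<in> {1..N})"

definition valid_writer :: "nat \<Rightarrow> real \<Rightarrow> ('a list \<Rightarrow> nat \<Rightarrow> 'a::zero) \<Rightarrow> bool" where
  "valid_writer N \<rho>w e \<longleftrightarrow>
     (\<forall>v. \<exists>W. W \<subseteq> {1..N} \<and> real (card W) \<le> \<rho>w * real N \<and> (\<forall>i. i \<notin> W \<longrightarrow> e v i = 0))"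

definition awtp_code_wf ::
  "nat \<Rightarrow> 'm set \<Rightarrow> ('m \<Rightarrow> (nat \<Rightarrow> 'a::zero) pmf) \<Rightarrow> bool" where
  "awtp_code_wf N M enc \<longleftrightarrow> finite M \<and> M \<noteq> {} \<and>
     (\<forall>m\<in>M. \<forall>c\<in>set_pmf (enc m). word_on N c)"

definition perfectly_secure ::
  "nat \<Rightarrow> real \<Rightarrow> 'm set \<Rightarrow> ('m \<Rightarrow> (nat \<Rightarrow> 'a) pmf) \<Rightarrow> bool" where
  "perfectly_secure N \<rho>r M enc \<longleftrightarrow>
     (\<forall>q. valid_reader N q \<longrightarrow>
        (\<forall>m\<in>M. \<forall>m'\<in>M. map_pmf (adv_view N \<rho>r q) (enc m) = map_pmf (adv_view N \<rho>r q) (enc m')))"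

definition reliable ::
  "nat \<Rightarrow> real \<Rightarrow> real \<Rightarrow> 'm set \<Rightarrow> ('m \<Rightarrow> (nat \<Rightarrow> 'a::ab_group_add) pmf)
     \<Rightarrow> ((nat \<Rightarrow> 'a) \<Rightarrow> 'm) \<Rightarrow> real \<Rightarrow> bool" where
  "reliable N \<rho>r \<rho>w M enc dec \<delta> \<longleftrightarrow>
     (\<forall>q e. valid_reader N q \<longrightarrow> valid_writer N \<rho>w e \<longrightarrow>
        (\<forall>m\<in>M. measure_pmf.prob (enc m)
                   {c. dec (\<lambda>i. c i + e (adv_view N \<rho>r q c) i) \<noteq> m} \<le> \<delta>))"

definition code_rate :: "nat \<Rightarrow> 'm set \<Rightarrow> 'a::finite itself \<Rightarrow> real" where
  "code_rate N M (_::'a itself) = log 2 (real (card M)) / (real N * log 2 (real CARD('a)))"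

definition achievable_perfect ::
  "'a::{ab_group_add,finite} itself \<Rightarrow> 'm itself \<Rightarrow> real \<Rightarrow> real \<Rightarrow> real \<Rightarrow> bool" where
  "achievable_perfect A (_::'m itself) \<rho>r \<rho>w R \<longleftrightarrow>
     (\<exists>(M :: nat \<Rightarrow> 'm set) (enc :: nat \<Rightarrow> 'm \<Rightarrow> (nat \<Rightarrow> 'a) pmf)
        (dec :: nat \<Rightarrow> (nat \<Rightarrow> 'a) \<Rightarrow> 'm).
        (\<forall>N. awtp_code_wf N (M N) (enc N) \<and> perfectly_secure N \<rho>r (M N) (enc N)) \<and>
        (\<forall>\<xi>>0. \<exists>N0. \<forall>N\<ge>N0.
            code_rate N (M N) A \<ge> R - \<xi> \<and> reliable N \<rho>r \<rho>w (M N) (enc N) (dec N) \<xi>))"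

end

theory Submission
  imports Defs "HOL-Library.Function_Algebras"
begin

text \<open>The adversary reads the first \<open>r \<approx> \<rho>r N\<close> letters and adds an error \<open>u\<close>
  supported on the next \<open>w \<approx> \<rho>w N\<close> positions. Double count the probabilities of
  correct decoding over all messages \<open>m\<close> and all \<open>q ^ w\<close> errors \<open>u\<close>: by reliability
  the total is at least \<open>|M| q ^ w (1 - \<delta>)\<close>. On the other hand, adding \<open>u\<close> only
  translates the written block, so only the codeword \<open>z\<close> with that block erased matters;
  for fixed \<open>z\<close> the \<open>q ^ w\<close> errors split among the messages according to
  \<open>dec (z + u)\<close>, and by perfect secrecy every message gives \<open>z\<close> at most the same weight,
  the probability of agreeing with \<open>z\<close> on the read block. These weights sum to
  \<open>q ^ (N - r - w)\<close>, hence \<open>|M| (1 - \<delta>) \<le> q ^ (N - r - w)\<close> and the rate is at most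
  \<open>1 - \<rho>r - \<rho>w + O(1/N)\<close>.\<close>

definition words_on :: "nat set \<Rightarrow> (nat \<Rightarrow> 'a::zero) set" where
  "words_on A = {c. \<forall>i. i \<notin> A \<longrightarrow> c i = 0}"

lemma word_on_iff_words_on: "word_on N c \<longleftrightarrow> c \<in> words_on {1..N}"
  by (simp add: word_on_def words_on_def)

lemma bij_betw_words_on_PiE:
  "bij_betw (\<lambda>c. restrict c A) (words_on A) (A \<rightarrow>\<^sub>E UNIV)"
  by (rule bij_betw_byWitness[where f' = "\<lambda>g i. if i \<in> A then g i else 0"])
     (auto simp: words_on_def PiE_def extensional_def fun_eq_iff)

lemma card_words_on:
  assumes "finite A"
  shows "card (words_on A :: (nat \<Rightarrow> 'a::{zero,finite}) set) = CARD('a) ^ card A"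
proof -
  have "card (words_on A :: (nat \<Rightarrow> 'a) set) = card (A \<rightarrow>\<^sub>E (UNIV :: 'a set))"
    by (rule bij_betw_same_card[OF bij_betw_words_on_PiE])
  also have "\<dots> = CARD('a) ^ card A"
    using assms by (simp add: card_PiE)
  finally show ?thesis .
qed

lemma finite_words_on:
  assumes "finite A"
  shows "finite (words_on A :: (nat \<Rightarrow> 'a::{zero,finite}) set)"
proof -
  have "finite (A \<rightarrow>\<^sub>E (UNIV :: 'a set))"
    using assms by (simp add: finite_PiE)
  then show ?thesis
    using bij_betw_finite[OF bij_betw_words_on_PiE] by blast
qed

lemma card_words_on_agreeing:
  fixes c :: "nat \<Rightarrow> 'a::{zero,finite}"
  assumes "finite B" and "R \<subseteq> B"
  shows "card {z \<in> words_on B. \<forall>i\<in>R. z i = c i} = CARD('a) ^ card (B - R)"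
proof -
  have "bij_betw (\<lambda>z i. if i \<in> R then 0 else z i)
          {z \<in> words_on B. \<forall>i\<in>R. z i = c i} (words_on (B - R))"
    by (rule bij_betw_byWitness[where f' = "\<lambda>t i. if i \<in> R then c i else t i"])
       (use assms in \<open>auto simp: words_on_def fun_eq_iff\<close>)
  then have "card {z \<in> words_on B. \<forall>i\<in>R. z i = c i} = card (words_on (B - R) :: (nat \<Rightarrow> 'a) set)"
    by (rule bij_betw_same_card)
  then show ?thesis
    using assms(1) by (simp add: card_words_on)
qed

lemma card_translate_words_on:
  fixes t :: "nat \<Rightarrow> 'a::group_add"
  assumes "t \<in> words_on W"
  shows "card {u \<in> words_on W. P (t + u)} = card {u \<in> words_on W. P u}"
proof -
  have "bij_betw ((+) t) {u \<in> words_on W. P (t + u)} {u \<in> words_on W. P u}"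
    by (rule bij_betw_byWitness[where f' = "(+) (- t)"])
       (use assms in \<open>auto simp: words_on_def\<close>)
  then show ?thesis
    by (rule bij_betw_same_card)
qed

lemma sum_card_fibres_le:
  assumes "finite U"
  shows "(\<Sum>m\<in>M. card {u \<in> U. f u = m}) \<le> card U"
proof (cases "finite M")
  case True
  have "(\<Sum>m\<in>M. card {u \<in> U. f u = m}) = card (\<Union>m\<in>M. {u \<in> U. f u = m})"
    using True assms by (intro card_UN_disjoint[symmetric]) auto
  also have "\<dots> \<le> card U"
    using assms by (intro card_mono) auto
  finally show ?thesis .
qed simp

lemma prob_eq_sum_pmf:
  assumes "finite S" and "set_pmf p \<subseteq> S"
  shows "measure_pmf.prob p X = (\<Sum>c\<in>S. if c \<in> X then pmf p c else 0)"
proof -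
  have "X \<inter> set_pmf p = (S \<inter> X) \<inter> set_pmf p"
    using assms(2) by blast
  then have "measure_pmf.prob p X = measure_pmf.prob p (S \<inter> X)"
    by (metis measure_Int_set_pmf)
  also have "\<dots> = (\<Sum>c\<in>S. if c \<in> X then pmf p c else 0)"
    using assms(1) by (simp add: measure_measure_pmf_finite sum.If_cases)
  finally show ?thesis .
qed

lemma sum_prob_decodes_le:
  fixes p :: "(nat \<Rightarrow> 'a::{group_add,finite}) pmf" and dec :: "(nat \<Rightarrow> 'a) \<Rightarrow> 'm"
  assumes "finite A" and supp: "set_pmf p \<subseteq> words_on A"
    and "W \<subseteq> A" and "R \<inter> W = {}"
  shows "(\<Sum>u\<in>words_on W. measure_pmf.prob p {c. dec (c + u) = m})
       \<le> (\<Sum>z\<in>words_on (A - W). real (card {u \<in> words_on W. dec (z + u) = m})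
                                 * measure_pmf.prob p {c. \<forall>i\<in>R. c i = z i})"
proof -
  define S U Z where "S = (words_on A :: (nat \<Rightarrow> 'a) set)"
    and "U = (words_on W :: (nat \<Rightarrow> 'a) set)" and "Z = (words_on (A - W) :: (nat \<Rightarrow> 'a) set)"
  define g where "g z = real (card {u \<in> U. dec (z + u) = m})" for z
  define proj where "proj c = (\<lambda>i. if i \<in> W then 0 else c i)" for c :: "nat \<Rightarrow> 'a"
  have "finite W"
    using \<open>finite A\<close> \<open>W \<subseteq> A\<close> finite_subset by blast
  then have fin: "finite S" "finite U" "finite Z"
    unfolding S_def U_def Z_def using \<open>finite A\<close> by (auto intro: finite_words_on)
  have prob_sum: "measure_pmf.prob p X = (\<Sum>c\<in>S. if c \<in> X then pmf p c else 0)" for X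
    using prob_eq_sum_pmf[OF fin(1)] supp unfolding S_def by blast
  \<comment> \<open>the \<open>W\<close>-part of \<open>c\<close> is absorbed by translating the error\<close>
  have count_proj: "real (card {u \<in> U. dec (c + u) = m}) = g (proj c)" for c
  proof -
    define t where "t = (\<lambda>i. if i \<in> W then c i else 0)"
    have "c + u = proj c + (t + u)" for u
      by (simp add: fun_eq_iff proj_def t_def)
    moreover have "t \<in> U"
      by (simp add: U_def t_def words_on_def)
    ultimately show ?thesis
      using card_translate_words_on[of t W "\<lambda>v. dec (proj c + v) = m"]
      by (simp add: U_def g_def)
  qed
  have proj_Z: "proj c \<in> Z" if "c \<in> S" for c
    using that by (simp add: S_def Z_def words_on_def proj_def)
  have "(\<Sum>u\<in>U. measure_pmf.prob p {c. dec (c + u) = m})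
      = (\<Sum>c\<in>S. \<Sum>u\<in>U. if dec (c + u) = m then pmf p c else 0)"
    by (simp add: prob_sum sum.swap[of _ U])
  also have "\<dots> = (\<Sum>c\<in>S. pmf p c * g (proj c))"
    using fin(2) by (simp add: sum.If_cases Int_def count_proj[symmetric] mult.commute)
  also have "\<dots> = (\<Sum>c\<in>S. \<Sum>z\<in>Z. if proj c = z then g z * pmf p c else 0)"
    using fin(3) proj_Z by (simp add: mult.commute)
  also have "\<dots> = (\<Sum>z\<in>Z. g z * measure_pmf.prob p {c. proj c = z})"
    by (subst sum.swap) (simp add: prob_sum sum_distrib_left if_distrib cong: if_cong)
  also have "\<dots> \<le> (\<Sum>z\<in>Z. g z * measure_pmf.prob p {c. \<forall>i\<in>R. c i = z i})"
    using \<open>R \<inter> W = {}\<close>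
    by (intro sum_mono mult_left_mono measure_pmf.finite_measure_mono)
       (auto simp: g_def proj_def)
  finally show ?thesis
    by (simp add: U_def Z_def g_def)
qed

lemma sum_prob_agreeing_eq:
  fixes p :: "(nat \<Rightarrow> 'a::{zero,finite}) pmf"
  assumes "finite B" and "R \<subseteq> B" and "finite (set_pmf p)"
  shows "(\<Sum>z\<in>words_on B. measure_pmf.prob p {c. \<forall>i\<in>R. c i = z i})
         = real CARD('a) ^ card (B - R)"
proof -
  let ?S = "set_pmf p"
  have "(\<Sum>z\<in>words_on B. measure_pmf.prob p {c. \<forall>i\<in>R. c i = z i})
      = (\<Sum>c\<in>?S. \<Sum>z\<in>words_on B. if \<forall>i\<in>R. z i = c i then pmf p c else 0)"
    using prob_eq_sum_pmf[OF assms(3) order_refl] by (subst sum.swap) (simp add: eq_commute)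
  also have "\<dots> = (\<Sum>c\<in>?S. pmf p c * real CARD('a) ^ card (B - R))"
    using finite_words_on[OF assms(1), where 'a='a]
    by (intro sum.cong refl)
       (simp add: sum.If_cases Int_def card_words_on_agreeing[OF assms(1,2)] mult.commute)
  also have "\<dots> = real CARD('a) ^ card (B - R)"
    using assms(3) by (simp add: sum_distrib_right[symmetric] sum_pmf_eq_1)
  finally show ?thesis .
qed

lemma card_messages_le:
  fixes enc :: "'m \<Rightarrow> (nat \<Rightarrow> 'a::{group_add,finite}) pmf" and dec :: "(nat \<Rightarrow> 'a) \<Rightarrow> 'm"
  assumes "finite A" and supp: "\<And>m. m \<in> M \<Longrightarrow> set_pmf (enc m) \<subseteq> words_on A"
    and "R \<subseteq> A" and "W \<subseteq> A" and "R \<inter> W = {}"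
    and secret: "\<And>m m' z. m \<in> M \<Longrightarrow> m' \<in> M \<Longrightarrow>
      measure_pmf.prob (enc m) {c. \<forall>i\<in>R. c i = z i} = measure_pmf.prob (enc m') {c. \<forall>i\<in>R. c i = z i}"
    and reliable: "\<And>m u. m \<in> M \<Longrightarrow> u \<in> words_on W \<Longrightarrow>
      measure_pmf.prob (enc m) {c. dec (c + u) \<noteq> m} \<le> \<delta>"
  shows "real (card M) * (1 - \<delta>) \<le> real CARD('a) ^ card (A - W - R)"
proof (cases "M = {}")
  case False
  then obtain m0 where "m0 \<in> M"
    by blast
  define U Z where "U = (words_on W :: (nat \<Rightarrow> 'a) set)" and "Z = (words_on (A - W) :: (nat \<Rightarrow> 'a) set)"
  define \<pi> where "\<pi> z = measure_pmf.prob (enc m0) {c. \<forall>i\<in>R. c i = z i}" for z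
  define g where "g m z = real (card {u \<in> U. dec (z + u) = m})" for m z
  have "finite U"
    unfolding U_def using \<open>finite A\<close> \<open>W \<subseteq> A\<close> by (meson finite_subset finite_words_on)
  have finite_support: "finite (set_pmf (enc m0))"
    using supp[OF \<open>m0 \<in> M\<close>] finite_words_on[OF \<open>finite A\<close>] finite_subset by blast
  have "real (card M) * (real (card U) * (1 - \<delta>)) = (\<Sum>m\<in>M. \<Sum>u\<in>U. 1 - \<delta>)"
    by simp
  also have "\<dots> \<le> (\<Sum>m\<in>M. \<Sum>u\<in>U. measure_pmf.prob (enc m) {c. dec (c + u) = m})"
  proof (intro sum_mono)
    fix m u assume "m \<in> M" "u \<in> U"
    then show "1 - \<delta> \<le> measure_pmf.prob (enc m) {c. dec (c + u) = m}"
      using reliable[of m u] measure_pmf.prob_compl[of "{c. dec (c + u) = m}" "enc m"]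
      by (simp add: U_def Compl_eq_Diff_UNIV[symmetric] Collect_neg_eq)
  qed
  also have "\<dots> \<le> (\<Sum>m\<in>M. \<Sum>z\<in>Z. g m z * \<pi> z)"
    using sum_prob_decodes_le[OF \<open>finite A\<close> supp \<open>W \<subseteq> A\<close> \<open>R \<inter> W = {}\<close>]
      secret[OF _ \<open>m0 \<in> M\<close>]
    by (intro sum_mono) (simp add: U_def Z_def g_def \<pi>_def)
  also have "\<dots> = (\<Sum>z\<in>Z. (\<Sum>m\<in>M. g m z) * \<pi> z)"
    by (subst sum.swap) (simp add: sum_distrib_right)
  also have "\<dots> \<le> (\<Sum>z\<in>Z. real (card U) * \<pi> z)"
    using sum_card_fibres_le[OF \<open>finite U\<close>, where M = M]
    by (intro sum_mono mult_right_mono) (simp_all add: g_def \<pi>_def flip: of_nat_sum)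
  also have "\<dots> = real (card U) * real CARD('a) ^ card (A - W - R)"
    using sum_prob_agreeing_eq[OF _ _ finite_support, of "A - W" R] \<open>finite A\<close> \<open>R \<subseteq> A\<close> \<open>R \<inter> W = {}\<close>
    by (auto simp: Z_def \<pi>_def simp flip: sum_distrib_left)
  finally have "real (card U) * (real (card M) * (1 - \<delta>))
             \<le> real (card U) * real CARD('a) ^ card (A - W - R)"
    by (simp add: algebra_simps)
  moreover have "card U > 0"
    using \<open>finite U\<close> card_gt_0_iff by (force simp: U_def words_on_def)
  ultimately show ?thesis
    by simp
qed auto

lemma reads_sequential:
  "k \<le> N \<Longrightarrow> reads (\<lambda>v. min (length v + 1) N) c k = map c [1..<k + 1]"
proof (induction k)
  case (Suc k)
  then have "reads (\<lambda>v. min (length v + 1) N) c k = map c [1..<k + 1]"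
    by simp
  with Suc.prems show ?case
    by (simp del: upt_Suc add: upt_Suc_append)
qed simp

lemma valid_reader_sequential:
  "1 \<le> N \<Longrightarrow> valid_reader N (\<lambda>v. min (length v + 1) N)"
  by (simp add: valid_reader_def)

lemma perfectly_secure_prob_prefix_eq:
  fixes enc :: "'m \<Rightarrow> (nat \<Rightarrow> 'a) pmf"
  assumes "perfectly_secure N \<rho>r M enc" and "1 \<le> N" and "n_reads N \<rho>r \<le> N"
    and "m \<in> M" and "m' \<in> M"
  shows "measure_pmf.prob (enc m) {c. \<forall>i\<in>{1..n_reads N \<rho>r}. c i = z i}
       = measure_pmf.prob (enc m') {c. \<forall>i\<in>{1..n_reads N \<rho>r}. c i = z i}"
proof -
  let ?q = "\<lambda>v. min (length v + 1) N" and ?r = "n_reads N \<rho>r"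
  have view: "adv_view N \<rho>r ?q c = map c [1..<?r + 1]" for c :: "nat \<Rightarrow> 'a"
    unfolding adv_view_def using \<open>?r \<le> N\<close> by (rule reads_sequential)
  have event: "{c. \<forall>i\<in>{1..?r}. c i = z i} = adv_view N \<rho>r ?q -` {map z [1..<?r + 1]}"
    unfolding vimage_def view
    by (simp add: atLeastLessThanSuc_atLeastAtMost del: upt_Suc)
  have "map_pmf (adv_view N \<rho>r ?q) (enc m) = map_pmf (adv_view N \<rho>r ?q) (enc m')"
    using assms(1,4,5) valid_reader_sequential[OF assms(2)] unfolding perfectly_secure_def by blast
  then show ?thesis
    unfolding event measure_map_pmf[symmetric] by simp
qed

lemma reliable_prob_error_le:
  fixes enc :: "'m \<Rightarrow> (nat \<Rightarrow> 'a::ab_group_add) pmf"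
  assumes "reliable N \<rho>r \<rho>w M enc dec \<delta>" and "1 \<le> N" and "m \<in> M"
    and "W \<subseteq> {1..N}" and "real (card W) \<le> \<rho>w * real N" and "u \<in> words_on W"
  shows "measure_pmf.prob (enc m) {c. dec (c + u) \<noteq> m} \<le> \<delta>"
proof -
  have "valid_writer N \<rho>w (\<lambda>_. u)"
    using assms(4-6) unfolding valid_writer_def words_on_def by blast
  then show ?thesis
    using reliable_def[THEN iffD1, rule_format, OF assms(1) valid_reader_sequential[OF assms(2)]]
      assms(3)
    by (simp add: plus_fun_def)
qed

lemma real_nat_floor_bounds:
  assumes "0 \<le> x"
  shows "x - 1 < real (nat \<lfloor>x\<rfloor>)" and "real (nat \<lfloor>x\<rfloor>) \<le> x"
  using assms real_of_int_floor_gt_diff_one[of x] by (simp_all add: of_nat_floor)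

lemma n_reads_add_floor_le:
  assumes "0 \<le> \<rho>r" and "0 \<le> \<rho>w" and "\<rho>r + \<rho>w \<le> 1"
  shows "n_reads N \<rho>r + nat \<lfloor>\<rho>w * real N\<rfloor> \<le> N"
proof -
  have "real (n_reads N \<rho>r) + real (nat \<lfloor>\<rho>w * real N\<rfloor>) \<le> \<rho>r * real N + \<rho>w * real N"
    unfolding n_reads_def using assms(1,2) by (intro add_mono real_nat_floor_bounds(2)) simp_all
  also have "\<dots> \<le> real N"
    using mult_right_mono[OF assms(3), of "real N"] by (simp add: algebra_simps)
  finally show ?thesis
    by (metis of_nat_add of_nat_le_iff)
qed

lemma awtp_code_card_le:
  fixes enc :: "'m \<Rightarrow> (nat \<Rightarrow> 'a::{ab_group_add,finite}) pmf"
  assumes "awtp_code_wf N M enc" and "perfectly_secure N \<rho>r M enc"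
    and "reliable N \<rho>r \<rho>w M enc dec \<delta>"
    and "0 \<le> \<rho>r" and "0 \<le> \<rho>w" and "\<rho>r + \<rho>w \<le> 1" and "1 \<le> N"
  shows "real (card M) * (1 - \<delta>)
         \<le> real CARD('a) ^ (N - n_reads N \<rho>r - nat \<lfloor>\<rho>w * real N\<rfloor>)"
proof -
  define r w where "r = n_reads N \<rho>r" and "w = nat \<lfloor>\<rho>w * real N\<rfloor>"
  have "r + w \<le> N"
    using n_reads_add_floor_le[OF assms(4-6)] by (simp add: r_def w_def)
  have w_le: "real w \<le> \<rho>w * real N"
    unfolding w_def using \<open>0 \<le> \<rho>w\<close> by (simp add: real_nat_floor_bounds(2))
  have "{1..N} - {r + 1..r + w} - {1..r} = {r + w + 1..N}"
    by auto
  then have card_rest: "card ({1..N} - {r + 1..r + w} - {1..r}) = N - r - w"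
    by simp
  have "real (card M) * (1 - \<delta>) \<le> real CARD('a) ^ card ({1..N} - {r + 1..r + w} - {1..r})"
  proof (rule card_messages_le[where enc = enc and dec = dec])
    show "set_pmf (enc m) \<subseteq> words_on {1..N}" if "m \<in> M" for m
      using assms(1) that by (auto simp: awtp_code_wf_def word_on_iff_words_on)
    show "measure_pmf.prob (enc m) {c. \<forall>i\<in>{1..r}. c i = z i}
        = measure_pmf.prob (enc m') {c. \<forall>i\<in>{1..r}. c i = z i}" if "m \<in> M" "m' \<in> M" for m m' z
      using perfectly_secure_prob_prefix_eq[OF assms(2,7) _ that] \<open>r + w \<le> N\<close> by (simp add: r_def)
    show "measure_pmf.prob (enc m) {c. dec (c + u) \<noteq> m} \<le> \<delta>"
      if "m \<in> M" "u \<in> words_on {r + 1..r + w}" for m u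
      using reliable_prob_error_le[OF assms(3,7) that(1) _ _ that(2)] \<open>r + w \<le> N\<close> w_le
      by simp
  qed (use \<open>r + w \<le> N\<close> in auto)
  then show ?thesis
    by (simp only: card_rest) (simp add: r_def w_def)
qed

lemma code_rate_le:
  assumes "finite M" and "M \<noteq> {}" and "real (card M) \<le> 2 * real CARD('a::finite) ^ k"
    and "1 \<le> N"
  shows "code_rate N M TYPE('a) \<le> (1 + real k) / real N"
proof (cases "CARD('a) = 1")
  case True
  \<comment> \<open>then log 2 CARD('a) = 0 and the rate is a division by zero, hence 0\<close>
  then show ?thesis
    by (simp add: code_rate_def)
next
  case False
  define L where "L = log 2 (real CARD('a))"
  have "CARD('a) > 0"
    by simp
  with False have "CARD('a) \<ge> 2"
    by linarith
  then have "L \<ge> 1"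
    by (simp add: L_def)
  have "card M > 0"
    using assms(1,2) by (simp add: card_gt_0_iff)
  then have "log 2 (real (card M)) \<le> log 2 (2 * real CARD('a) ^ k)"
    using assms(3) by simp
  also have "\<dots> = 1 + real k * L"
    by (simp add: L_def log_mult log_nat_power)
  finally have "code_rate N M TYPE('a) \<le> (1 + real k * L) / (real N * L)"
    using \<open>L \<ge> 1\<close> \<open>1 \<le> N\<close> by (simp add: code_rate_def L_def divide_right_mono)
  also have "\<dots> = 1 / (real N * L) + real k / real N"
    using \<open>L \<ge> 1\<close> by (simp add: add_divide_distrib)
  also have "\<dots> \<le> (1 + real k) / real N"
    using \<open>L \<ge> 1\<close> \<open>1 \<le> N\<close> by (simp add: add_divide_distrib frac_le)
  finally show ?thesis .
qed

lemma awtp_code_rate_le: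
  fixes enc :: "'m \<Rightarrow> (nat \<Rightarrow> 'a::{ab_group_add,finite}) pmf"
  assumes "awtp_code_wf N M enc" and "perfectly_secure N \<rho>r M enc"
    and "reliable N \<rho>r \<rho>w M enc dec \<delta>" and "\<delta> \<le> 1 / 2"
    and "0 \<le> \<rho>r" and "0 \<le> \<rho>w" and "\<rho>r + \<rho>w \<le> 1" and "1 \<le> N"
  shows "code_rate N M TYPE('a) \<le> 1 - \<rho>r - \<rho>w + 3 / real N"
proof -
  define r w where "r = n_reads N \<rho>r" and "w = nat \<lfloor>\<rho>w * real N\<rfloor>"
  have "real (card M) * (1 - \<delta>) \<le> real CARD('a) ^ (N - r - w)"
    using awtp_code_card_le[OF assms(1-3,5-8)] by (simp add: r_def w_def)
  moreover have "real (card M) * (1 / 2) \<le> real (card M) * (1 - \<delta>)"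
    using \<open>\<delta> \<le> 1 / 2\<close> by (intro mult_left_mono) auto
  ultimately have "real (card M) \<le> 2 * real CARD('a) ^ (N - r - w)"
    by linarith
  then have "code_rate N M TYPE('a) \<le> (1 + real (N - r - w)) / real N"
    using assms(1,8) by (intro code_rate_le) (auto simp: awtp_code_wf_def)
  also have "\<dots> \<le> ((1 - \<rho>r - \<rho>w) * real N + 3) / real N"
  proof (intro divide_right_mono)
    have "\<rho>r * real N - 1 < real r" and "\<rho>w * real N - 1 < real w"
      unfolding r_def w_def n_reads_def using \<open>0 \<le> \<rho>r\<close> \<open>0 \<le> \<rho>w\<close>
      by (simp_all add: real_nat_floor_bounds(1))
    moreover have "real (N - r - w) = real N - real r - real w"
      using n_reads_add_floor_le[OF assms(5-7), of N] by (simp add: r_def w_def)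
    ultimately show "1 + real (N - r - w) \<le> (1 - \<rho>r - \<rho>w) * real N + 3"
      by (simp add: algebra_simps)
  qed simp
  also have "\<dots> = 1 - \<rho>r - \<rho>w + 3 / real N"
    using \<open>1 \<le> N\<close> by (simp add: field_simps)
  finally show ?thesis .
qed

theorem mainTheorem4:
  fixes \<rho>r \<rho>w R :: real
  assumes "0 \<le> \<rho>r" and "0 \<le> \<rho>w" and "\<rho>r + \<rho>w \<le> 1"
    and "achievable_perfect TYPE('a::{ab_group_add,finite}) TYPE('m) \<rho>r \<rho>w R"
  shows "R \<le> 1 - \<rho>r - \<rho>w"
proof -
  obtain M :: "nat \<Rightarrow> 'm set" and enc :: "nat \<Rightarrow> 'm \<Rightarrow> (nat \<Rightarrow> 'a) pmf" and dec
    where code: "\<And>N. awtp_code_wf N (M N) (enc N) \<and> perfectly_secure N \<rho>r (M N) (enc N)"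
      and rate: "\<And>\<xi>. \<xi> > 0 \<Longrightarrow> \<exists>N0. \<forall>N\<ge>N0.
                   R - \<xi> \<le> code_rate N (M N) TYPE('a) \<and> reliable N \<rho>r \<rho>w (M N) (enc N) (dec N) \<xi>"
    using assms(4) unfolding achievable_perfect_def by blast
  show ?thesis
  proof (rule field_le_epsilon)
    fix e :: real
    assume "0 < e"
    define \<xi> where "\<xi> = min (e / 2) (1 / 2)"
    obtain N0 where N0: "\<And>N. N \<ge> N0 \<Longrightarrow>
        R - \<xi> \<le> code_rate N (M N) TYPE('a) \<and> reliable N \<rho>r \<rho>w (M N) (enc N) (dec N) \<xi>"
      using rate[of \<xi>] \<open>0 < e\<close> by (auto simp: \<xi>_def)
    define N where "N = max N0 (nat \<lceil>6 / e\<rceil>) + 1"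
    have "1 \<le> N" and "6 / e \<le> real N"
      by (simp_all add: N_def) linarith
    have "R - \<xi> \<le> code_rate N (M N) TYPE('a)"
      using N0[of N] by (simp add: N_def)
    also have "\<dots> \<le> 1 - \<rho>r - \<rho>w + 3 / real N"
      using code[of N] N0[of N] assms(1-3) \<open>1 \<le> N\<close>
      by (intro awtp_code_rate_le[where dec = "dec N" and \<delta> = \<xi>]) (auto simp: N_def \<xi>_def)
    also have "3 / real N \<le> e / 2"
      using \<open>6 / e \<le> real N\<close> \<open>0 < e\<close> \<open>1 \<le> N\<close> by (simp add: field_simps)
    finally show "R \<le> 1 - \<rho>r - \<rho>w + e"
      by (simp add: \<xi>_def)
  qed
qed

end
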